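(* The functor $\Gamma_G\colon\mathcal R_G\to N^*\mathcal L_G$ defined by $\Gamma_G(\overrightarrow e)=H(r^e;-)$ and $\Gamma_G(l(e,u,f))=\eta_{r^e}\,\mathcal L_G(r(f,u,e),-)\,\eta_{r^f}^{-1}$ is a local isomorphism.
   Context: Let $S$ be a regular semigroup, $E=E(S)$, $e\,\omega^l f$ iff $ef=e$, $e\,\omega^r f$ iff $fe=e$; $L_a$ is the $\mathscr L$-class of $a$, $E(L_a)=E\cap L_a$. $\mathcal L_G$: objects $E/\mathscr L$ (classes $\overleftarrow e$); morphisms $\overleftarrow e\to\overleftarrow f$ the classes $r(e,u,f)$, $u\in eSf$, under $(e,u,f)\sim(g,v,h)$ iff $e\mathscr L g$, $f\mathscr L h$, $u=ev$; composition $r(e,u,f)r(f,v,g)=r(e,uv,g)$; inclusions $r(e,e,f)$ for $e\,\omega^l f$. $\mathcal R_G$: objects $E/\mathscr R$ (classes $\overrightarrow e$); morphisms $\overrightarrow e\to\overrightarrow f$ the classes $l(e,u,f)$, $u\in fSe$, under $(e,u,f)\sim(g,v,h)$ iff $e\mathscr R g$, $f\mathscr R h$, $u=ve$; composition $l(e,u,f)l(f,v,g)=l(e,vu,g)$; inclusions $l(e,e,f)$ for $e\,\omega^r f$. Both are normal categories; composition is written left to right. A normal cone $\gamma$ in a normal category $\mathcal C$ with apex $c_\gamma$ is a map assigning to each object $c$ a morphism $\gamma(c)\colon c\to c_\gamma$ compatible with inclusions and with at least one isomorphism component. Every morphism $f$ of $\mathcal C$ has a normal factorization $f=quj$ (retraction,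 isomorphism, inclusion) and $f^\circ:=qu$ is its epimorphic component (in $\mathcal L_G$, $r(e,y,f)^\circ=r(e,y,h)$ for $h\in E(L_y)$). For a normal cone $\gamma$ and an epimorphism $h\colon c_\gamma\to d$, $\gamma\ast h$ is the normal cone $c\mapsto\gamma(c)h$. For a normal cone $\gamma$, the H-functor $H(\gamma;-)\colon\mathcal C\to\mathbf{Set}$ is $H(\gamma;c)=\{\gamma\ast f^\circ: f\in\mathcal C(c_\gamma,c)\}$, $H(\gamma;g)\colon\gamma\ast f^\circ\mapsto\gamma\ast(fg)^\circ$; $\eta_\gamma\colon H(\gamma;-)\to\mathcal C(c_\gamma,-)$ is the natural isomorphism with components $\gamma\ast f^\circ\mapsto f$. The normal dual $N^*\mathcal C$ is the full subcategory of the functor category $[\mathcal C,\mathbf{Set}]$ whose objects are the H-functors; its inclusions are the natural transformations $H(\gamma;-)\to H(\gamma';-)$ all of whose components are set inclusions. For a morphism $k\colon c\to c'$ of $\mathcal C$, $\mathcal C(k,-)\colon\mathcal C(c',-)\to\mathcal C(c,-)$ is the natural transformation $h\mapsto kh$. For $e\in E$, $r^e$ is the normal cone in $\mathcal L_G$ with apex $\overleftarrow e$, $r^e(\overleftarrow g)=r(g,ge,e)$. For an object $c$ of a category with subobjects, the ideal $\langle c\rangle$ is the full subcategory on objects $d\subseteq c$. A functor $F$ between categories with subobjects is a local isomorphism if it is inclusion preserving, fully faithful, and for each object $c$ its restriction to $\langle c\rangle$ is an isomorphism onto $\langle F(c)\rangle$. *)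

theory Defs
  imports Main "HOL-Library.FuncSet"
begin

definition regular_semigroup :: "'a::semigroup_mult itself \<Rightarrow> bool" where
  "regular_semigroup _ \<longleftrightarrow> (\<forall>a::'a. \<exists>x. a * x * a = a)"

definition Eset :: "'a::semigroup_mult set" where
  "Eset = {e. e * e = e}"

text \<open>Green's relations in S (without adjoining an identity: S^1 a = S^1 b, a S^1 = b S^1).\<close>
definition Lrel :: "'a::semigroup_mult \<Rightarrow> 'a \<Rightarrow> bool" where
  "Lrel a b \<longleftrightarrow> (b = a \<or> (\<exists>x. b = x * a)) \<and> (a = b \<or> (\<exists>y. a = y * b))"

definition Rrel :: "'a::semigroup_mult \<Rightarrow> 'a \<Rightarrow> bool" where
  "Rrel a b \<longleftrightarrow> (b = a \<or> (\<exists>x. b = a * x)) \<and> (a = b \<or> (\<exists>y. a = b * y))"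

type_synonym 'a Lmor = "('a \<times> 'a \<times> 'a) set"
type_synonym 'a cone = "'a set \<Rightarrow> 'a Lmor"

definition Lcls :: "'a::semigroup_mult \<Rightarrow> 'a set" where
  "Lcls e = {g \<in> Eset. Lrel g e}"

definition Lobj :: "'a::semigroup_mult set set" where
  "Lobj = Lcls ` Eset"

definition Ltrip :: "('a::semigroup_mult \<times> 'a \<times> 'a) set" where
  "Ltrip = {(e, u, f). e \<in> Eset \<and> f \<in> Eset \<and> (\<exists>s. u = e * s * f)}"

definition rmor :: "'a::semigroup_mult \<Rightarrow> 'a \<Rightarrow> 'a \<Rightarrow> 'a Lmor" where
  "rmor e u f = {(g, v, h). (g, v, h) \<in> Ltrip \<and> Lrel e g \<and> Lrel f h \<and> u = e * v}"

definition Lhom :: "'a::semigroup_mult set \<Rightarrow> 'a set \<Rightarrow> 'a Lmor set" where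
  "Lhom c d = {rmor e u f | e u f. (e, u, f) \<in> Ltrip \<and> Lcls e = c \<and> Lcls f = d}"

definition Ldom :: "'a::semigroup_mult Lmor \<Rightarrow> 'a set" where
  "Ldom m = (SOME c. \<exists>d. c \<in> Lobj \<and> d \<in> Lobj \<and> m \<in> Lhom c d)"

definition Lcod :: "'a::semigroup_mult Lmor \<Rightarrow> 'a set" where
  "Lcod m = (SOME d. \<exists>c. c \<in> Lobj \<and> d \<in> Lobj \<and> m \<in> Lhom c d)"

text \<open>composition (left to right): r(e,u,f) r(f,v,g) = r(e,uv,g)\<close>
definition Lcomp :: "'a::semigroup_mult Lmor \<Rightarrow> 'a Lmor \<Rightarrow> 'a Lmor" where
  "Lcomp m n = (SOME k. \<exists>e u f v g. (e, u, f) \<in> Ltrip \<and> (f, v, g) \<in> Ltrip \<and>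
      m = rmor e u f \<and> n = rmor f v g \<and> k = rmor e (u * v) g)"

definition Lid :: "'a::semigroup_mult set \<Rightarrow> 'a Lmor" where
  "Lid c = (SOME k. \<exists>e \<in> Eset. c = Lcls e \<and> k = rmor e e e)"

definition Liso :: "'a::semigroup_mult Lmor \<Rightarrow> bool" where
  "Liso m \<longleftrightarrow> (\<exists>c \<in> Lobj. \<exists>d \<in> Lobj. m \<in> Lhom c d \<and>
      (\<exists>n \<in> Lhom d c. Lcomp m n = Lid c \<and> Lcomp n m = Lid d))"

text \<open>subobject relation: c \<subseteq> d iff there is an inclusion r(e,e,f) with e omega^l f\<close>
definition Lsub :: "'a::semigroup_mult set \<Rightarrow> 'a set \<Rightarrow> bool" where
  "Lsub c d \<longleftrightarrow> (\<exists>e \<in> Eset. \<exists>f \<in> Eset. c = Lcls e \<and> d = Lcls f \<and> e * f = e)"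

definition Lincl :: "'a::semigroup_mult set \<Rightarrow> 'a set \<Rightarrow> 'a Lmor" where
  "Lincl c d = (SOME m. \<exists>e \<in> Eset. \<exists>f \<in> Eset. c = Lcls e \<and> d = Lcls f \<and> e * f = e
      \<and> m = rmor e e f)"

definition Lepi :: "'a::semigroup_mult Lmor \<Rightarrow> 'a Lmor" where
  "Lepi m = (SOME k. \<exists>e y f h. (e, y, f) \<in> Ltrip \<and> m = rmor e y f \<and> h \<in> Eset \<and> Lrel h y
      \<and> k = rmor e y h)"

definition normal_cone :: "'a::semigroup_mult cone \<Rightarrow> 'a set \<Rightarrow> bool" where
  "normal_cone \<gamma> d \<longleftrightarrow> d \<in> Lobj \<and> \<gamma> \<in> extensional Lobj \<and>
     (\<forall>c \<in> Lobj. \<gamma> c \<in> Lhom c d) \<and>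
     (\<forall>c \<in> Lobj. \<forall>c' \<in> Lobj. Lsub c c' \<longrightarrow> Lcomp (Lincl c c') (\<gamma> c') = \<gamma> c) \<and>
     (\<exists>c \<in> Lobj. Liso (\<gamma> c))"

definition is_normal_cone :: "'a::semigroup_mult cone \<Rightarrow> bool" where
  "is_normal_cone \<gamma> \<longleftrightarrow> (\<exists>d. normal_cone \<gamma> d)"

definition apex :: "'a::semigroup_mult cone \<Rightarrow> 'a set" where
  "apex \<gamma> = (SOME d. normal_cone \<gamma> d)"

definition cone_star :: "'a::semigroup_mult cone \<Rightarrow> 'a Lmor \<Rightarrow> 'a cone" where
  "cone_star \<gamma> h = restrict (\<lambda>c. Lcomp (\<gamma> c) h) Lobj"

definition Hset :: "'a::semigroup_mult cone \<Rightarrow> 'a set \<Rightarrow> 'a cone set" where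
  "Hset \<gamma> c = {cone_star \<gamma> (Lepi f) | f. f \<in> Lhom (apex \<gamma>) c}"

definition Hmap :: "'a::semigroup_mult cone \<Rightarrow> 'a Lmor \<Rightarrow> 'a cone \<Rightarrow> 'a cone" where
  "Hmap \<gamma> g = restrict (\<lambda>\<delta>. SOME \<delta>'. \<exists>f \<in> Lhom (apex \<gamma>) (Ldom g).
       \<delta> = cone_star \<gamma> (Lepi f) \<and> \<delta>' = cone_star \<gamma> (Lepi (Lcomp f g))) (Hset \<gamma> (Ldom g))"

text \<open>A Set-valued functor on L_G represented by its object map and morphism map
  (both extensional).\<close>
type_synonym 'a Sfun = "('a set \<Rightarrow> 'a cone set) \<times> ('a Lmor \<Rightarrow> 'a cone \<Rightarrow> 'a cone)"

definition Lmors :: "'a::semigroup_mult Lmor set" where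
  "Lmors = (\<Union>c \<in> Lobj. \<Union>d \<in> Lobj. Lhom c d)"

definition Hfun :: "'a::semigroup_mult cone \<Rightarrow> 'a Sfun" where
  "Hfun \<gamma> = (restrict (Hset \<gamma>) Lobj, restrict (Hmap \<gamma>) Lmors)"

definition eta :: "'a::semigroup_mult cone \<Rightarrow> 'a set \<Rightarrow> 'a cone \<Rightarrow> 'a Lmor" where
  "eta \<gamma> c x = (SOME f. f \<in> Lhom (apex \<gamma>) c \<and> x = cone_star \<gamma> (Lepi f))"

definition NLobj :: "'a::semigroup_mult Sfun set" where
  "NLobj = {Hfun \<gamma> | \<gamma>. is_normal_cone \<gamma>}"

definition NLhom :: "'a::semigroup_mult Sfun \<Rightarrow> 'a Sfun \<Rightarrow> ('a set \<Rightarrow> 'a cone \<Rightarrow> 'a cone) set" where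
  "NLhom F G = {\<tau>. \<tau> \<in> extensional Lobj \<and>
     (\<forall>c \<in> Lobj. \<tau> c \<in> extensional (fst F c) \<and> \<tau> c ` fst F c \<subseteq> fst G c) \<and>
     (\<forall>c \<in> Lobj. \<forall>d \<in> Lobj. \<forall>g \<in> Lhom c d. \<forall>x \<in> fst F c.
         snd G g (\<tau> c x) = \<tau> d (snd F g x))}"

definition NLid :: "'a::semigroup_mult Sfun \<Rightarrow> 'a set \<Rightarrow> 'a cone \<Rightarrow> 'a cone" where
  "NLid F = restrict (\<lambda>c. restrict (\<lambda>x. x) (fst F c)) Lobj"

text \<open>composition written left to right: first \<sigma> then \<tau>\<close>
definition NLcomp :: "'a::semigroup_mult Sfun \<Rightarrow> ('a set \<Rightarrow> 'a cone \<Rightarrow> 'a cone)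
     \<Rightarrow> ('a set \<Rightarrow> 'a cone \<Rightarrow> 'a cone) \<Rightarrow> 'a set \<Rightarrow> 'a cone \<Rightarrow> 'a cone" where
  "NLcomp F \<sigma> \<tau> = restrict (\<lambda>c. restrict (\<lambda>x. \<tau> c (\<sigma> c x)) (fst F c)) Lobj"

definition NLis_incl :: "'a::semigroup_mult Sfun \<Rightarrow> 'a Sfun \<Rightarrow> ('a set \<Rightarrow> 'a cone \<Rightarrow> 'a cone) \<Rightarrow> bool" where
  "NLis_incl F G \<tau> \<longleftrightarrow> \<tau> \<in> NLhom F G \<and> (\<forall>c \<in> Lobj. \<forall>x \<in> fst F c. \<tau> c x = x)"

definition NLsub :: "'a::semigroup_mult Sfun \<Rightarrow> 'a Sfun \<Rightarrow> bool" where
  "NLsub F G \<longleftrightarrow> (\<exists>\<tau>. NLis_incl F G \<tau>)"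

definition Rcls :: "'a::semigroup_mult \<Rightarrow> 'a set" where
  "Rcls e = {g \<in> Eset. Rrel g e}"

definition Robj :: "'a::semigroup_mult set set" where
  "Robj = Rcls ` Eset"

definition Rtrip :: "('a::semigroup_mult \<times> 'a \<times> 'a) set" where
  "Rtrip = {(e, u, f). e \<in> Eset \<and> f \<in> Eset \<and> (\<exists>s. u = f * s * e)}"

definition lmor :: "'a::semigroup_mult \<Rightarrow> 'a \<Rightarrow> 'a \<Rightarrow> ('a \<times> 'a \<times> 'a) set" where
  "lmor e u f = {(g, v, h). (g, v, h) \<in> Rtrip \<and> Rrel e g \<and> Rrel f h \<and> u = v * e}"

definition Rhom :: "'a::semigroup_mult set \<Rightarrow> 'a set \<Rightarrow> ('a \<times> 'a \<times> 'a) set set" where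
  "Rhom c d = {lmor e u f | e u f. (e, u, f) \<in> Rtrip \<and> Rcls e = c \<and> Rcls f = d}"

text \<open>composition (left to right): l(e,u,f) l(f,v,g) = l(e,vu,g)\<close>
definition Rcomp :: "('a::semigroup_mult \<times> 'a \<times> 'a) set \<Rightarrow> ('a \<times> 'a \<times> 'a) set \<Rightarrow> ('a \<times> 'a \<times> 'a) set" where
  "Rcomp m n = (SOME k. \<exists>e u f v g. (e, u, f) \<in> Rtrip \<and> (f, v, g) \<in> Rtrip \<and>
      m = lmor e u f \<and> n = lmor f v g \<and> k = lmor e (v * u) g)"

text \<open>subobject relation: c \<subseteq> d iff there is an inclusion l(e,e,f) with e omega^r f\<close>
definition Rsub :: "'a::semigroup_mult set \<Rightarrow> 'a set \<Rightarrow> bool" where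
  "Rsub c d \<longleftrightarrow> (\<exists>e \<in> Eset. \<exists>f \<in> Eset. c = Rcls e \<and> d = Rcls f \<and> f * e = e)"

definition Rincl :: "'a::semigroup_mult set \<Rightarrow> 'a set \<Rightarrow> ('a \<times> 'a \<times> 'a) set" where
  "Rincl c d = (SOME m. \<exists>e \<in> Eset. \<exists>f \<in> Eset. c = Rcls e \<and> d = Rcls f \<and> f * e = e
      \<and> m = lmor e e f)"

definition rcone :: "'a::semigroup_mult \<Rightarrow> 'a cone" where
  "rcone e = restrict (\<lambda>c. SOME m. \<exists>g \<in> Eset. c = Lcls g \<and> m = rmor g (g * e) e) Lobj"

definition Gamma_obj :: "'a::semigroup_mult set \<Rightarrow> 'a Sfun" where
  "Gamma_obj c = (SOME F. \<exists>e \<in> Eset. c = Rcls e \<and> F = Hfun (rcone e))"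

text \<open>eta_{r^e} ; L_G(r(f,u,e),-) ; eta_{r^f}^{-1}, componentwise\<close>
definition Gamma_formula :: "'a::semigroup_mult \<Rightarrow> 'a \<Rightarrow> 'a \<Rightarrow> 'a set \<Rightarrow> 'a cone \<Rightarrow> 'a cone" where
  "Gamma_formula e u f = restrict (\<lambda>c. restrict (\<lambda>x.
      cone_star (rcone f) (Lepi (Lcomp (rmor f u e) (eta (rcone e) c x))))
      (Hset (rcone e) c)) Lobj"

definition Gamma_mor :: "('a::semigroup_mult \<times> 'a \<times> 'a) set \<Rightarrow> 'a set \<Rightarrow> 'a cone \<Rightarrow> 'a cone" where
  "Gamma_mor m = (SOME \<tau>. \<exists>e u f. (e, u, f) \<in> Rtrip \<and> m = lmor e u f \<and> \<tau> = Gamma_formula e u f)"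

end

theory Submission
  imports Defs
begin

text \<open>Everything is computed through the principal cones \<open>\<rho>\<^sup>y : L_k \<mapsto> r(k, k y, h)\<close>,
  \<open>h \<in> E(L_y)\<close>. The H-functor of \<open>r\<^sup>e\<close> has \<open>H(r\<^sup>e; L_b) = {\<rho>\<^sup>w | w \<in> eSb}\<close>, and
  \<open>H(r\<^sup>e; r(b, v, b'))\<close> sends \<open>\<rho>\<^sup>w\<close> to \<open>\<rho>\<^sup>w\<^sup>v\<close>; in a regular semigroup \<open>\<rho>\<^sup>y\<^sup>z\<close>
  determines \<open>y z\<close>. Hence \<open>\<Gamma>(l(e, u, f))\<close> is left multiplication \<open>\<rho>\<^sup>w \<mapsto> \<rho>\<^sup>u\<^sup>w\<close>, which
  makes functoriality and preservation of inclusions immediate, and by the Yoneda argument every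
  natural transformation \<open>H(r\<^sup>e;-) \<rightarrow> H(r\<^sup>f;-)\<close> is such a left multiplication for a unique
  \<open>u \<in> fSe\<close>. Finally a subfunctor \<open>H(\<gamma>;-) \<subseteq> H(r\<^sup>e;-)\<close> contains \<open>\<gamma>\<close>, so \<open>\<gamma> = \<rho>\<^sup>y\<close> with
  \<open>y \<in> eS\<close>, and \<open>H(\<rho>\<^sup>y;-) = H(r\<^sup>k;-)\<close> for \<open>k \<in> E(R_y)\<close>, an idempotent below \<open>e\<close> in \<open>\<omega>\<^sup>r\<close>.\<close>

lemma Eset_iff: "e \<in> Eset \<longleftrightarrow> e * e = e"
  by (simp add: Eset_def)

lemma Eset_absorb_left: "e \<in> Eset \<Longrightarrow> e * (e * x) = e * x"
  by (metis Eset_iff mult.assoc)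

lemma Lrel_refl: "Lrel a a"
  unfolding Lrel_def by auto

lemma Lrel_sym: "Lrel a b \<Longrightarrow> Lrel b a"
  unfolding Lrel_def by auto

lemma Lrel_trans: "Lrel a b \<Longrightarrow> Lrel b c \<Longrightarrow> Lrel a c"
  unfolding Lrel_def by (metis mult.assoc)

lemma Lrel_right_unit: "Lrel a h \<Longrightarrow> h \<in> Eset \<Longrightarrow> a * h = a"
  unfolding Lrel_def by (metis Eset_iff mult.assoc)

lemma Lrel_Eset_iff: "e \<in> Eset \<Longrightarrow> g \<in> Eset \<Longrightarrow> Lrel e g \<longleftrightarrow> e * g = e \<and> g * e = g"
  by (metis Lrel_def Lrel_right_unit Lrel_sym)

lemma Lrel_mult_left_unit: "Lrel a y \<Longrightarrow> a * w = w \<Longrightarrow> Lrel w (y * w)"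
  unfolding Lrel_def by (metis mult.assoc)

lemma Rrel_refl: "Rrel a a"
  unfolding Rrel_def by auto

lemma Rrel_sym: "Rrel a b \<Longrightarrow> Rrel b a"
  unfolding Rrel_def by auto

lemma Rrel_trans: "Rrel a b \<Longrightarrow> Rrel b c \<Longrightarrow> Rrel a c"
  unfolding Rrel_def by (metis mult.assoc)

lemma Rrel_left_unit: "Rrel a h \<Longrightarrow> h \<in> Eset \<Longrightarrow> h * a = a"
  unfolding Rrel_def by (metis Eset_iff mult.assoc)

lemma Rrel_Eset_iff: "e \<in> Eset \<Longrightarrow> g \<in> Eset \<Longrightarrow> Rrel e g \<longleftrightarrow> g * e = e \<and> e * g = g"
  by (metis Rrel_def Rrel_left_unit Rrel_sym)

lemma Lcls_eq_iff: "e \<in> Eset \<Longrightarrow> g \<in> Eset \<Longrightarrow> Lcls e = Lcls g \<longleftrightarrow> Lrel e g"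
  unfolding Lcls_def by (auto intro: Lrel_refl dest: Lrel_sym Lrel_trans)

lemma Rcls_eq_iff: "e \<in> Eset \<Longrightarrow> g \<in> Eset \<Longrightarrow> Rcls e = Rcls g \<longleftrightarrow> Rrel e g"
  unfolding Rcls_def by (auto intro: Rrel_refl dest: Rrel_sym Rrel_trans)

lemma Lcls_in_Lobj: "e \<in> Eset \<Longrightarrow> Lcls e \<in> Lobj"
  by (simp add: Lobj_def)

lemma LobjE: "c \<in> Lobj \<Longrightarrow> (\<And>e. e \<in> Eset \<Longrightarrow> c = Lcls e \<Longrightarrow> P) \<Longrightarrow> P"
  by (auto simp: Lobj_def)

lemma Rcls_in_Robj: "e \<in> Eset \<Longrightarrow> Rcls e \<in> Robj"
  by (simp add: Robj_def)

lemma RobjE: "c \<in> Robj \<Longrightarrow> (\<And>e. e \<in> Eset \<Longrightarrow> c = Rcls e \<Longrightarrow> P) \<Longrightarrow> P"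
  by (auto simp: Robj_def)

lemma Ltrip_iff: "(e, u, f) \<in> Ltrip \<longleftrightarrow> e \<in> Eset \<and> f \<in> Eset \<and> e * u = u \<and> u * f = u"
  unfolding Ltrip_def by (auto simp: Eset_iff) (metis mult.assoc)+

lemma rmor_eq_iff:
  assumes t: "(e, u, f) \<in> Ltrip" "(e', u', f') \<in> Ltrip"
  shows "rmor e u f = rmor e' u' f' \<longleftrightarrow> Lrel e e' \<and> Lrel f f' \<and> u = e * u'"
proof
  assume "rmor e u f = rmor e' u' f'"
  moreover have "(e, u, f) \<in> rmor e u f"
    using t(1) by (auto simp: rmor_def Ltrip_iff Lrel_refl)
  ultimately have "Lrel e' e" "Lrel f' f" "u' = e' * u"
    by (auto simp: rmor_def)
  moreover have "e * e' = e" using \<open>Lrel e' e\<close> t by (auto simp: Lrel_Eset_iff Ltrip_iff)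
  ultimately show "Lrel e e' \<and> Lrel f f' \<and> u = e * u'"
    using t(1) by (metis Lrel_sym Ltrip_iff mult.assoc)
next
  assume r: "Lrel e e' \<and> Lrel f f' \<and> u = e * u'"
  have ee: "e * e' = e" "e' * e = e'" using r t by (auto simp: Lrel_Eset_iff Ltrip_iff)
  have "u' = e' * u" using t ee r by (metis Ltrip_iff mult.assoc)
  then have "Lrel e g \<and> Lrel f h \<and> u = e * v \<longleftrightarrow> Lrel e' g \<and> Lrel f' h \<and> u' = e' * v" for g v h
    using r ee by (metis Lrel_sym Lrel_trans mult.assoc)
  then show "rmor e u f = rmor e' u' f'" unfolding rmor_def by simp
qed

lemma Ltrip_mult: "(e, w, b) \<in> Ltrip \<Longrightarrow> (b, v, b') \<in> Ltrip \<Longrightarrow> (e, w * v, b') \<in> Ltrip"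
  by (auto simp: Ltrip_iff) (metis mult.assoc)+

lemma Ltrip_Rrel_factor:
  assumes a: "a \<in> Eset" "Lrel a y" and k: "k \<in> Eset" "k * y = y" "k = y * x" and b: "b \<in> Eset"
  shows "(k, z, b) \<in> Ltrip \<longleftrightarrow> (\<exists>w. z = y * w \<and> (a, w, b) \<in> Ltrip)"
proof
  assume z: "(k, z, b) \<in> Ltrip"
  have "y * (a * (x * z)) = z" using a k z
    by (metis Lrel_right_unit Lrel_sym Ltrip_iff mult.assoc)
  moreover have "(a, a * (x * z), b) \<in> Ltrip" using a z by (auto simp: Ltrip_iff Eset_absorb_left mult.assoc)
  ultimately show "\<exists>w. z = y * w \<and> (a, w, b) \<in> Ltrip" by metis
qed (use k b in \<open>auto simp: Ltrip_iff, (metis mult.assoc)+\<close>)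

lemma Lhom_iff:
  "m \<in> Lhom c d \<longleftrightarrow> (\<exists>e u f. (e, u, f) \<in> Ltrip \<and> Lcls e = c \<and> Lcls f = d \<and> m = rmor e u f)"
  unfolding Lhom_def by auto

lemma Lhom_Lcls_iff:
  assumes E: "e \<in> Eset" "g \<in> Eset"
  shows "m \<in> Lhom (Lcls e) (Lcls g) \<longleftrightarrow> (\<exists>y. (e, y, g) \<in> Ltrip \<and> m = rmor e y g)"
proof
  assume "m \<in> Lhom (Lcls e) (Lcls g)"
  then obtain e1 u1 g1 where t: "(e1, u1, g1) \<in> Ltrip" and c: "Lcls e1 = Lcls e" "Lcls g1 = Lcls g"
    and m: "m = rmor e1 u1 g1" by (auto simp: Lhom_iff)
  have L: "Lrel e1 e" "Lrel g1 g" using c E t Lcls_eq_iff Ltrip_iff by blast+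
  have ee: "e1 * e = e1" "g1 * g = g1" "g * g1 = g" using L E t by (auto simp: Lrel_Eset_iff Ltrip_iff)
  have u1: "e1 * u1 = u1" "u1 * g1 = u1" using t by (auto simp: Ltrip_iff)
  define y where "y = e * u1"
  have y: "e * y = y" "y * g = y"
    unfolding y_def using E by (simp_all add: Eset_absorb_left) (metis u1 ee mult.assoc)
  have "rmor e1 u1 g1 = rmor e y g"
    using t E y L by (subst rmor_eq_iff) (auto simp: Ltrip_iff y_def, metis ee(1) mult.assoc u1(1))
  then show "\<exists>y. (e, y, g) \<in> Ltrip \<and> m = rmor e y g" using E y m by (auto simp: Ltrip_iff)
qed (use E in \<open>auto simp: Lhom_iff\<close>)

lemma Lhom_imp_Lobj: "m \<in> Lhom c d \<Longrightarrow> c \<in> Lobj \<and> d \<in> Lobj"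
  by (auto simp: Lhom_iff Lobj_def Ltrip_iff)

lemma Lhom_unique: "m \<in> Lhom c d \<Longrightarrow> m \<in> Lhom c' d' \<Longrightarrow> c = c' \<and> d = d'"
  unfolding Lhom_iff by (metis Lcls_eq_iff Ltrip_iff rmor_eq_iff)

lemma Ldom_eq: "m \<in> Lhom c d \<Longrightarrow> Ldom m = c"
  unfolding Ldom_def by (rule some_equality) (use Lhom_imp_Lobj Lhom_unique in blast)+

lemma rmor_in_Lhom: "(e, u, f) \<in> Ltrip \<Longrightarrow> rmor e u f \<in> Lhom (Lcls e) (Lcls f)"
  by (auto simp: Lhom_iff)

lemma Ldom_rmor: "(e, u, f) \<in> Ltrip \<Longrightarrow> Ldom (rmor e u f) = Lcls e"
  by (rule Ldom_eq) (rule rmor_in_Lhom)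

lemma Lmors_iff: "m \<in> Lmors \<longleftrightarrow> (\<exists>c d. m \<in> Lhom c d)"
  unfolding Lmors_def using Lhom_imp_Lobj by blast

lemma Lcomp_rmor:
  assumes t: "(e, u, f) \<in> Ltrip" "(f, v, g) \<in> Ltrip"
  shows "Lcomp (rmor e u f) (rmor f v g) = rmor e (u * v) g"
  unfolding Lcomp_def
proof (rule some_equality)
  fix k assume "\<exists>e1 u1 f1 v1 g1. (e1, u1, f1) \<in> Ltrip \<and> (f1, v1, g1) \<in> Ltrip \<and>
        rmor e u f = rmor e1 u1 f1 \<and> rmor f v g = rmor f1 v1 g1 \<and> k = rmor e1 (u1 * v1) g1"
  then obtain e1 u1 f1 v1 g1 where t1: "(e1, u1, f1) \<in> Ltrip" "(f1, v1, g1) \<in> Ltrip"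
    and q: "rmor e u f = rmor e1 u1 f1" "rmor f v g = rmor f1 v1 g1" and k: "k = rmor e1 (u1 * v1) g1"
    by blast
  have r: "Lrel e e1" "Lrel f f1" "u = e * u1" "Lrel g g1" "v = f * v1"
    using q t t1 rmor_eq_iff by blast+
  have "f1 * f = f1" using r(2) t t1 by (auto simp: Lrel_Eset_iff Ltrip_iff)
  then have "u * v = e * (u1 * v1)" using r t1 by (metis Ltrip_iff mult.assoc)
  moreover have "(e, u * v, g) \<in> Ltrip" "(e1, u1 * v1, g1) \<in> Ltrip"
    using t t1 by (auto simp: Ltrip_iff) (metis mult.assoc)+
  ultimately show "k = rmor e (u * v) g" using k r rmor_eq_iff by metis
qed (use t in blast)

lemma Lepi_rmor:
  assumes t: "(e, y, f) \<in> Ltrip" and h: "h \<in> Eset" "Lrel h y"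
  shows "Lepi (rmor e y f) = rmor e y h"
  unfolding Lepi_def
proof (rule some_equality)
  fix k assume "\<exists>e1 y1 f1 h1. (e1, y1, f1) \<in> Ltrip \<and> rmor e y f = rmor e1 y1 f1
      \<and> h1 \<in> Eset \<and> Lrel h1 y1 \<and> k = rmor e1 y1 h1"
  then obtain e1 y1 f1 h1 where t1: "(e1, y1, f1) \<in> Ltrip" and q: "rmor e y f = rmor e1 y1 f1"
    and h1: "h1 \<in> Eset" "Lrel h1 y1" and k: "k = rmor e1 y1 h1" by blast
  have r: "Lrel e e1" "y = e * y1" using q t t1 rmor_eq_iff by blast+
  have "e1 * e = e1" using r(1) t t1 by (auto simp: Lrel_Eset_iff Ltrip_iff)
  then have "y1 = e1 * y" using t1 r(2) by (metis Ltrip_iff mult.assoc)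
  then have "Lrel y y1" unfolding Lrel_def using r(2) by blast
  then have "Lrel h h1" using h(2) h1(2) by (meson Lrel_sym Lrel_trans)
  moreover have "(e, y, h) \<in> Ltrip" "(e1, y1, h1) \<in> Ltrip"
    using t t1 h h1 by (auto simp: Ltrip_iff dest: Lrel_sym intro: Lrel_right_unit)
  ultimately show "k = rmor e y h" using k r rmor_eq_iff by metis
qed (use t h in blast)

lemma Lid_Lcls: "e \<in> Eset \<Longrightarrow> Lid (Lcls e) = rmor e e e"
  unfolding Lid_def
  by (rule some_equality, blast, clarify, subst rmor_eq_iff)
    (auto simp: Ltrip_iff Eset_iff Lcls_eq_iff Lrel_Eset_iff)

lemma Lincl_Lcls: "e \<in> Eset \<Longrightarrow> f \<in> Eset \<Longrightarrow> e * f = e \<Longrightarrow> Lincl (Lcls e) (Lcls f) = rmor e e f"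
  unfolding Lincl_def
  by (rule some_equality, blast, clarify, subst rmor_eq_iff)
    (auto simp: Ltrip_iff Eset_iff Lcls_eq_iff Lrel_Eset_iff)

lemma Liso_rmor_idem:
  assumes e: "e \<in> Eset"
  shows "Liso (rmor e e e)"
proof -
  have t: "(e, e, e) \<in> Ltrip" using e by (simp add: Ltrip_iff Eset_iff)
  then have "rmor e e e \<in> Lhom (Lcls e) (Lcls e)" by (auto simp: Lhom_iff)
  moreover have "Lcomp (rmor e e e) (rmor e e e) = Lid (Lcls e)"
    using t e by (simp add: Lcomp_rmor Lid_Lcls Eset_iff)
  ultimately show ?thesis unfolding Liso_def using e Lcls_in_Lobj by blast
qed

lemma Rtrip_iff: "(e, u, f) \<in> Rtrip \<longleftrightarrow> e \<in> Eset \<and> f \<in> Eset \<and> f * u = u \<and> u * e = u"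
  unfolding Rtrip_def by (auto simp: Eset_iff) (metis mult.assoc)+

lemma Rtrip_mult_Ltrip: "(e, u, f) \<in> Rtrip \<Longrightarrow> (e, w, b) \<in> Ltrip \<Longrightarrow> (f, u * w, b) \<in> Ltrip"
  by (auto simp: Rtrip_iff Ltrip_iff) (metis mult.assoc)+

lemma lmor_eq_iff:
  assumes t: "(e, u, f) \<in> Rtrip" "(e', u', f') \<in> Rtrip"
  shows "lmor e u f = lmor e' u' f' \<longleftrightarrow> Rrel e e' \<and> Rrel f f' \<and> u = u' * e"
proof
  assume "lmor e u f = lmor e' u' f'"
  moreover have "(e, u, f) \<in> lmor e u f"
    using t(1) by (auto simp: lmor_def Rtrip_iff Rrel_refl)
  ultimately have "Rrel e' e" "Rrel f' f" "u' = u * e'"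
    by (auto simp: lmor_def)
  moreover have "e' * e = e" using \<open>Rrel e' e\<close> t by (auto simp: Rrel_Eset_iff Rtrip_iff)
  ultimately show "Rrel e e' \<and> Rrel f f' \<and> u = u' * e"
    using t(1) by (metis Rrel_sym Rtrip_iff mult.assoc)
next
  assume r: "Rrel e e' \<and> Rrel f f' \<and> u = u' * e"
  have ee: "e' * e = e" "e * e' = e'" using r t by (auto simp: Rrel_Eset_iff Rtrip_iff)
  have "u' = u * e'" using t ee r by (metis Rtrip_iff mult.assoc)
  then have "Rrel e g \<and> Rrel f h \<and> u = v * e \<longleftrightarrow> Rrel e' g \<and> Rrel f' h \<and> u' = v * e'" for g v h
    using r ee by (metis Rrel_sym Rrel_trans mult.assoc)
  then show "lmor e u f = lmor e' u' f'" unfolding lmor_def by simp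
qed

lemma Rhom_Rcls_iff:
  assumes E: "e \<in> Eset" "f \<in> Eset"
  shows "m \<in> Rhom (Rcls e) (Rcls f) \<longleftrightarrow> (\<exists>u. (e, u, f) \<in> Rtrip \<and> m = lmor e u f)"
proof
  assume "m \<in> Rhom (Rcls e) (Rcls f)"
  then obtain e1 u1 f1 where t: "(e1, u1, f1) \<in> Rtrip" and c: "Rcls e1 = Rcls e" "Rcls f1 = Rcls f"
    and m: "m = lmor e1 u1 f1" by (auto simp: Rhom_def)
  have R: "Rrel e1 e" "Rrel f1 f" using c E t Rcls_eq_iff Rtrip_iff by blast+
  have ee: "e1 * e = e" "f * f1 = f1" using R E t by (auto simp: Rrel_Eset_iff Rtrip_iff)
  have u1: "f1 * u1 = u1" "u1 * e1 = u1" using t by (auto simp: Rtrip_iff)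
  define u where "u = u1 * e"
  have u: "u * e = u" "f * u = u"
    unfolding u_def using E by (metis Eset_iff mult.assoc) (metis u1 ee mult.assoc)
  have "lmor e u f = lmor e1 u1 f1"
    using t E u R by (subst lmor_eq_iff) (auto simp: Rtrip_iff u_def intro: Rrel_sym)
  then show "\<exists>u. (e, u, f) \<in> Rtrip \<and> m = lmor e u f" using E u m by (auto simp: Rtrip_iff)
qed (use E in \<open>auto simp: Rhom_def\<close>)

lemma RhomE:
  assumes "m \<in> Rhom c d"
  obtains e u f where "(e, u, f) \<in> Rtrip" "c = Rcls e" "d = Rcls f" "m = lmor e u f"
  using assms by (auto simp: Rhom_def)

lemma Rcomp_lmor:
  assumes t: "(e, u, f) \<in> Rtrip" "(f, v, g) \<in> Rtrip"
  shows "Rcomp (lmor e u f) (lmor f v g) = lmor e (v * u) g"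
  unfolding Rcomp_def
proof (rule some_equality)
  fix k assume "\<exists>e1 u1 f1 v1 g1. (e1, u1, f1) \<in> Rtrip \<and> (f1, v1, g1) \<in> Rtrip \<and>
        lmor e u f = lmor e1 u1 f1 \<and> lmor f v g = lmor f1 v1 g1 \<and> k = lmor e1 (v1 * u1) g1"
  then obtain e1 u1 f1 v1 g1 where t1: "(e1, u1, f1) \<in> Rtrip" "(f1, v1, g1) \<in> Rtrip"
    and q: "lmor e u f = lmor e1 u1 f1" "lmor f v g = lmor f1 v1 g1" and k: "k = lmor e1 (v1 * u1) g1"
    by blast
  have r: "Rrel e e1" "Rrel f f1" "u = u1 * e" "Rrel g g1" "v = v1 * f"
    using q t t1 lmor_eq_iff by blast+
  have "f * f1 = f1" using r(2) t t1 by (auto simp: Rrel_Eset_iff Rtrip_iff)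
  then have "v * u = (v1 * u1) * e" using r t1 by (metis Rtrip_iff mult.assoc)
  moreover have "(e, v * u, g) \<in> Rtrip" "(e1, v1 * u1, g1) \<in> Rtrip"
    using t t1 by (auto simp: Rtrip_iff) (metis mult.assoc)+
  ultimately show "k = lmor e (v * u) g" using k r lmor_eq_iff by metis
qed (use t in blast)

lemma Rincl_Rcls: "e \<in> Eset \<Longrightarrow> f \<in> Eset \<Longrightarrow> f * e = e \<Longrightarrow> Rincl (Rcls e) (Rcls f) = lmor e e f"
  unfolding Rincl_def
  by (rule some_equality, blast, clarify, subst lmor_eq_iff)
    (auto simp: Rtrip_iff Eset_iff Rcls_eq_iff Rrel_Eset_iff)

lemma Rsub_Rcls_iff:
  assumes e: "e \<in> Eset"
  shows "Rsub d (Rcls e) \<longleftrightarrow> (\<exists>k\<in>Eset. d = Rcls k \<and> e * k = k)"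
proof
  assume "Rsub d (Rcls e)"
  then obtain k f where k: "k \<in> Eset" "f \<in> Eset" "d = Rcls k" "Rcls e = Rcls f" "f * k = k"
    by (auto simp: Rsub_def)
  then have "e * f = f" using e Rcls_eq_iff Rrel_Eset_iff by blast
  then show "\<exists>k\<in>Eset. d = Rcls k \<and> e * k = k" using k by (metis mult.assoc)
qed (use e in \<open>auto simp: Rsub_def\<close>)

definition pcone_at :: "'a::semigroup_mult \<Rightarrow> 'a \<Rightarrow> 'a cone" where
  "pcone_at y h = restrict (\<lambda>c. SOME m. \<exists>k\<in>Eset. c = Lcls k \<and> m = rmor k (k * y) h) Lobj"

definition Lidem :: "'a::semigroup_mult \<Rightarrow> 'a" where
  "Lidem y = (SOME h. h \<in> Eset \<and> Lrel h y)"

definition pcone :: "'a::semigroup_mult \<Rightarrow> 'a cone" where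
  "pcone y = pcone_at y (Lidem y)"

lemma rcone_eq_pcone_at: "rcone e = pcone_at e e"
  by (simp add: rcone_def pcone_at_def)

lemma pcone_at_extensional: "pcone_at y h \<in> extensional Lobj"
  by (simp add: pcone_at_def)

lemma pcone_at_Lcls:
  assumes "k \<in> Eset" "h \<in> Eset" "y * h = y"
  shows "pcone_at y h (Lcls k) = rmor k (k * y) h"
proof -
  have "(SOME m. \<exists>k'\<in>Eset. Lcls k = Lcls k' \<and> m = rmor k' (k' * y) h) = rmor k (k * y) h"
  proof (rule some_equality)
    fix m assume "\<exists>k'\<in>Eset. Lcls k = Lcls k' \<and> m = rmor k' (k' * y) h"
    then obtain k' where k': "k' \<in> Eset" "Lrel k k'" "m = rmor k' (k' * y) h"
      using assms Lcls_eq_iff by blast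
    then have "k * k' = k" "k' * k = k'" using assms by (auto simp: Lrel_Eset_iff)
    moreover have "(k, k * y, h) \<in> Ltrip" "(k', k' * y, h) \<in> Ltrip"
      using assms k' by (auto simp: Ltrip_iff Eset_absorb_left mult.assoc)
    ultimately have "rmor k' (k' * y) h = rmor k (k * y) h"
      using k' by (subst rmor_eq_iff) (auto simp: Lrel_sym Lrel_refl mult.assoc[symmetric])
    then show "m = rmor k (k * y) h" using k' by simp
  qed (use assms in blast)
  then show ?thesis using assms by (simp add: pcone_at_def Lcls_in_Lobj)
qed

lemma cone_eqI:
  assumes "\<gamma> \<in> extensional Lobj" "\<delta> \<in> extensional Lobj"
    and "\<And>k. k \<in> Eset \<Longrightarrow> \<gamma> (Lcls k) = \<delta> (Lcls k)"
  shows "\<gamma> = \<delta>"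
  by (rule extensionalityI[OF assms(1,2)]) (use assms(3) in \<open>blast elim: LobjE\<close>)

lemma pcone_at_cong:
  assumes "h \<in> Eset" "h' \<in> Eset" "Lrel h h'" "y * h = y"
  shows "pcone_at y h = pcone_at y h'"
proof (rule cone_eqI[OF pcone_at_extensional pcone_at_extensional])
  fix k :: 'a assume k: "k \<in> Eset"
  have "y * h' = y" using assms by (metis Lrel_Eset_iff mult.assoc)
  then show "pcone_at y h (Lcls k) = pcone_at y h' (Lcls k)"
    using assms k by (simp add: pcone_at_Lcls, subst rmor_eq_iff)
      (auto simp: Ltrip_iff Eset_absorb_left Lrel_refl mult.assoc)
qed

lemma cone_star_pcone_at:
  assumes a: "a \<in> Eset" "y * a = y" and t: "(a, w, h) \<in> Ltrip"
  shows "cone_star (pcone_at y a) (rmor a w h) = pcone_at (y * w) h"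
proof (rule cone_eqI)
  fix k :: 'a assume k: "k \<in> Eset"
  have h: "h \<in> Eset" "w * h = w" using t by (auto simp: Ltrip_iff)
  have "(k, k * y, a) \<in> Ltrip" using k a by (auto simp: Ltrip_iff Eset_absorb_left mult.assoc)
  then have "Lcomp (rmor k (k * y) a) (rmor a w h) = rmor k (k * y * w) h"
    using t by (rule Lcomp_rmor)
  then show "cone_star (pcone_at y a) (rmor a w h) (Lcls k) = pcone_at (y * w) h (Lcls k)"
    using k a h by (simp add: cone_star_def Lcls_in_Lobj pcone_at_Lcls mult.assoc)
qed (simp_all add: cone_star_def pcone_at_extensional)

lemma apex_eq:
  assumes "normal_cone \<gamma> d" shows "apex \<gamma> = d"
proof -
  have n: "normal_cone \<gamma> (apex \<gamma>)" unfolding apex_def using assms by (rule someI)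
  have "\<gamma> d \<in> Lhom d d" "\<gamma> d \<in> Lhom d (apex \<gamma>)" using assms n by (auto simp: normal_cone_def)
  then show ?thesis using Lhom_unique by blast
qed

lemma rcone_Lcls: "e \<in> Eset \<Longrightarrow> k \<in> Eset \<Longrightarrow> rcone e (Lcls k) = rmor k (k * e) e"
  by (simp add: rcone_eq_pcone_at pcone_at_Lcls Eset_iff[symmetric])

lemma rcone_normal:
  assumes e: "e \<in> Eset"
  shows "normal_cone (rcone e) (Lcls e)"
  unfolding normal_cone_def
proof (intro conjI)
  have ee: "e * e = e" using e by (simp add: Eset_iff)
  show "\<forall>c\<in>Lobj. rcone e c \<in> Lhom c (Lcls e)"
  proof
    fix c :: "'a set" assume "c \<in> Lobj"
    then obtain k where k: "k \<in> Eset" "c = Lcls k" by (rule LobjE)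
    have "k * (k * e) = k * e" "(k * e) * e = k * e" using k ee by (auto simp: Eset_absorb_left mult.assoc)
    then show "rcone e c \<in> Lhom c (Lcls e)" using k e by (auto simp: rcone_Lcls Lhom_Lcls_iff Ltrip_iff)
  qed
  show "\<forall>c\<in>Lobj. \<forall>c'\<in>Lobj. Lsub c c' \<longrightarrow> Lcomp (Lincl c c') (rcone e c') = rcone e c"
  proof (intro ballI impI)
    fix c c' :: "'a set" assume "Lsub c c'"
    then obtain k k' where k: "k \<in> Eset" "k' \<in> Eset" "c = Lcls k" "c' = Lcls k'" "k * k' = k"
      by (auto simp: Lsub_def)
    have "(k, k, k') \<in> Ltrip" "(k', k' * e, e) \<in> Ltrip"
      using k ee by (auto simp: Ltrip_iff Eset_iff Eset_absorb_left mult.assoc)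
    then have "Lcomp (rmor k k k') (rmor k' (k' * e) e) = rmor k (k * (k' * e)) e"
      by (rule Lcomp_rmor)
    then show "Lcomp (Lincl c c') (rcone e c') = rcone e c"
      using k e by (simp add: Lincl_Lcls rcone_Lcls mult.assoc[symmetric])
  qed
  show "\<exists>c\<in>Lobj. Liso (rcone e c)"
    using e ee by (intro bexI[of _ "Lcls e"]) (simp_all add: rcone_Lcls Liso_rmor_idem Lcls_in_Lobj)
qed (simp_all add: e Lcls_in_Lobj rcone_eq_pcone_at pcone_at_extensional)

lemma apex_rcone: "e \<in> Eset \<Longrightarrow> apex (rcone e) = Lcls e"
  by (rule apex_eq) (rule rcone_normal)

lemma apex_pcone_at_self: "e \<in> Eset \<Longrightarrow> apex (pcone_at e e) = Lcls e"
  using apex_rcone by (simp add: rcone_eq_pcone_at)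

text \<open>Because \<open>\<gamma> = \<gamma> * r(a, a, a)\<close>.\<close>
lemma normal_cone_in_Hset:
  assumes n: "normal_cone \<gamma> (Lcls a)" and a: "a \<in> Eset"
  shows "\<gamma> \<in> Hset \<gamma> (Lcls a)"
proof -
  have ta: "(a, a, a) \<in> Ltrip" using a by (simp add: Ltrip_iff Eset_iff)
  have "cone_star \<gamma> (rmor a a a) = \<gamma>"
  proof (rule cone_eqI)
    fix j :: 'a assume j: "j \<in> Eset"
    have "\<gamma> (Lcls j) \<in> Lhom (Lcls j) (Lcls a)" using n j by (simp add: normal_cone_def Lcls_in_Lobj)
    then obtain w where w: "(j, w, a) \<in> Ltrip" "\<gamma> (Lcls j) = rmor j w a"
      using Lhom_Lcls_iff[OF j a] by blast
    then show "cone_star \<gamma> (rmor a a a) (Lcls j) = \<gamma> (Lcls j)"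
      using Lcomp_rmor[OF w(1) ta] j by (simp add: cone_star_def Lcls_in_Lobj Ltrip_iff mult.assoc[symmetric])
  qed (use n in \<open>simp_all add: cone_star_def normal_cone_def\<close>)
  moreover have "Lepi (rmor a a a) = rmor a a a" using Lepi_rmor[OF ta a Lrel_refl] .
  moreover have "rmor a a a \<in> Lhom (Lcls a) (Lcls a)" using ta by (rule rmor_in_Lhom)
  ultimately have "\<gamma> = cone_star \<gamma> (Lepi (rmor a a a)) \<and> rmor a a a \<in> Lhom (Lcls a) (Lcls a)"
    by simp
  then show ?thesis unfolding Hset_def apex_eq[OF n] by blast
qed

lemma Hfun_fst: "c \<in> Lobj \<Longrightarrow> fst (Hfun \<gamma>) c = Hset \<gamma> c"
  by (simp add: Hfun_def)

lemma Hfun_snd: "g \<in> Lhom c d \<Longrightarrow> snd (Hfun \<gamma>) g = Hmap \<gamma> g"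
  by (auto simp: Hfun_def Lmors_iff)

lemma Hmap_extensional: "Hmap \<gamma> g \<in> extensional (Hset \<gamma> (Ldom g))"
  by (simp add: Hmap_def)

lemma NLhom_mapsto: "\<tau> \<in> NLhom F G \<Longrightarrow> c \<in> Lobj \<Longrightarrow> x \<in> fst F c \<Longrightarrow> \<tau> c x \<in> fst G c"
  by (auto simp: NLhom_def)

lemma NLhom_natural:
  "\<tau> \<in> NLhom F G \<Longrightarrow> g \<in> Lhom c d \<Longrightarrow> x \<in> fst F c \<Longrightarrow> snd G g (\<tau> c x) = \<tau> d (snd F g x)"
  unfolding NLhom_def using Lhom_imp_Lobj by blast

lemma Gamma_formula_extensional: "Gamma_formula e u f \<in> extensional Lobj"
  by (simp add: Gamma_formula_def)

lemma Gamma_formula_component_extensional: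
  "c \<in> Lobj \<Longrightarrow> Gamma_formula e u f c \<in> extensional (Hset (rcone e) c)"
  by (simp add: Gamma_formula_def)

section \<open>H-functors of principal cones in a regular semigroup\<close>

context
  assumes regular: "regular_semigroup TYPE('a::semigroup_mult)"
begin

lemma Lidem_Lrel: "Lidem (y::'a) \<in> Eset \<and> Lrel (Lidem y) y"
proof -
  obtain x where x: "y * x * y = y" using regular by (auto simp: regular_semigroup_def)
  then have "x * y \<in> Eset \<and> Lrel (x * y) y"
    unfolding Eset_iff Lrel_def by (metis mult.assoc)
  then show ?thesis unfolding Lidem_def by (rule someI)
qed

lemma Lidem_right_unit: "(y::'a) * Lidem y = y"
  using Lidem_Lrel by (meson Lrel_right_unit Lrel_sym)

lemma Rrel_idempotent_exists: "\<exists>k\<in>Eset. k * (y::'a) = y \<and> (\<exists>x. k = y * x)"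
proof -
  obtain x where x: "y * x * y = y" using regular by (auto simp: regular_semigroup_def)
  then have "y * x \<in> Eset" unfolding Eset_iff by (metis mult.assoc)
  then show ?thesis using x by blast
qed

lemma pcone_at_eq_pcone: "h \<in> Eset \<Longrightarrow> Lrel h (y::'a) \<Longrightarrow> pcone_at y h = pcone y"
  unfolding pcone_def using Lidem_Lrel[of y]
  by (intro pcone_at_cong) (auto intro: Lrel_trans Lrel_sym Lrel_right_unit)

lemma pcone_Lcls: "k \<in> Eset \<Longrightarrow> pcone (y::'a) (Lcls k) = rmor k (k * y) (Lidem y)"
  unfolding pcone_def using Lidem_Lrel[of y] Lidem_right_unit by (intro pcone_at_Lcls) auto

lemma pcone_eq_imp_mult_eq:
  assumes eq: "pcone z = pcone (z'::'a)" and j: "j \<in> Eset"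
  shows "j * z = j * z'"
proof -
  have "(j, j * z, Lidem z) \<in> Ltrip" "(j, j * z', Lidem z') \<in> Ltrip"
    using Lidem_Lrel Lidem_right_unit j by (auto simp: Ltrip_iff Eset_absorb_left mult.assoc)
  moreover have "rmor j (j * z) (Lidem z) = rmor j (j * z') (Lidem z')"
    using eq pcone_Lcls[OF j] by metis
  ultimately show ?thesis using j by (simp add: rmor_eq_iff Eset_absorb_left)
qed

text \<open>Regularity supplies an idempotent \<open>k\<close> with \<open>k y = y\<close>, which recovers \<open>y z\<close> from \<open>k (y z)\<close>.\<close>
lemma pcone_mult_left_inj: "pcone ((y::'a) * z) = pcone (y * z') \<Longrightarrow> y * z = y * z'"
  using Rrel_idempotent_exists[of y] pcone_eq_imp_mult_eq by (metis mult.assoc)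

lemma cone_star_Lepi_pcone_at:
  assumes a: "a \<in> Eset" "Lrel a (y::'a)" and t: "(a, w, b) \<in> Ltrip"
  shows "cone_star (pcone_at y a) (Lepi (rmor a w b)) = pcone (y * w)"
proof -
  let ?h = "Lidem w"
  have h: "?h \<in> Eset" "Lrel ?h w" using Lidem_Lrel by blast+
  have "(a, w, ?h) \<in> Ltrip" using t h Lidem_right_unit by (auto simp: Ltrip_iff)
  moreover have "y * a = y" using a by (metis Lrel_right_unit Lrel_sym)
  ultimately have "cone_star (pcone_at y a) (Lepi (rmor a w b)) = pcone_at (y * w) ?h"
    using Lepi_rmor[OF t h] cone_star_pcone_at[OF a(1)] by simp
  also have "\<dots> = pcone (y * w)"
    using t h Lrel_mult_left_unit[OF a(2)] by (intro pcone_at_eq_pcone) (auto simp: Ltrip_iff intro: Lrel_trans)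
  finally show ?thesis .
qed

context
  fixes y a :: 'a
  assumes a: "a \<in> Eset" "Lrel a y" and apex: "apex (pcone_at y a) = Lcls a"
begin

lemma Hset_pcone_at:
  assumes b: "b \<in> Eset"
  shows "Hset (pcone_at y a) (Lcls b) = {pcone (y * w) | w. (a, w, b) \<in> Ltrip}"
proof -
  have "Hset (pcone_at y a) (Lcls b) = {cone_star (pcone_at y a) (Lepi (rmor a w b)) | w. (a, w, b) \<in> Ltrip}"
    unfolding Hset_def apex Lhom_Lcls_iff[OF a(1) b] by auto
  also have "\<dots> = {pcone (y * w) | w. (a, w, b) \<in> Ltrip}"
    using cone_star_Lepi_pcone_at[OF a] by (intro Collect_cong) metis
  finally show ?thesis .
qed

lemma Hmap_pcone_at:
  assumes t: "(b, v, b') \<in> Ltrip" and w: "(a, w, b) \<in> Ltrip"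
  shows "Hmap (pcone_at y a) (rmor b v b') (pcone (y * w)) = pcone (y * w * v)"
proof -
  have b: "b \<in> Eset" using t by (simp add: Ltrip_iff)
  have dom: "Ldom (rmor b v b') = Lcls b" using t by (rule Ldom_rmor)
  have star: "cone_star (pcone_at y a) (Lepi (Lcomp (rmor a w' b) (rmor b v b'))) = pcone (y * w' * v)"
    if "(a, w', b) \<in> Ltrip" for w'
    using that t Lcomp_rmor cone_star_Lepi_pcone_at[OF a]
    by (metis (no_types, lifting) Ltrip_iff mult.assoc)
  have "(SOME \<delta>'. \<exists>f\<in>Lhom (Lcls a) (Lcls b). pcone (y * w) = cone_star (pcone_at y a) (Lepi f)
          \<and> \<delta>' = cone_star (pcone_at y a) (Lepi (Lcomp f (rmor b v b')))) = pcone (y * w * v)"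
  proof (rule some_equality)
    show "\<exists>f\<in>Lhom (Lcls a) (Lcls b). pcone (y * w) = cone_star (pcone_at y a) (Lepi f)
          \<and> pcone (y * w * v) = cone_star (pcone_at y a) (Lepi (Lcomp f (rmor b v b')))"
      using w star[OF w] cone_star_Lepi_pcone_at[OF a w]
      by (intro bexI[of _ "rmor a w b"]) (auto simp: Lhom_iff)
  next
    fix \<delta>' assume "\<exists>f\<in>Lhom (Lcls a) (Lcls b). pcone (y * w) = cone_star (pcone_at y a) (Lepi f)
          \<and> \<delta>' = cone_star (pcone_at y a) (Lepi (Lcomp f (rmor b v b')))"
    then obtain w' where w': "(a, w', b) \<in> Ltrip" and "pcone (y * w) = pcone (y * w')"
      and "\<delta>' = pcone (y * w' * v)"
      using Lhom_Lcls_iff[OF a(1) b] star cone_star_Lepi_pcone_at[OF a] by auto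
    then show "\<delta>' = pcone (y * w * v)" using pcone_mult_left_inj by metis
  qed
  moreover have "pcone (y * w) \<in> Hset (pcone_at y a) (Lcls b)" using Hset_pcone_at[OF b] w by blast
  ultimately show ?thesis by (simp add: Hmap_def dom apex)
qed

end

lemma Hset_rcone:
  assumes "e \<in> Eset" "b \<in> Eset"
  shows "Hset (rcone e) (Lcls (b::'a)) = {pcone w | w. (e, w, b) \<in> Ltrip}"
proof -
  have "{pcone (e * w) | w. (e, w, b) \<in> Ltrip} = {pcone w | w. (e, w, b) \<in> Ltrip}"
    by (intro Collect_cong) (metis Ltrip_iff)
  then show ?thesis
    using Hset_pcone_at[OF assms(1) Lrel_refl apex_pcone_at_self[OF assms(1)] assms(2)]
    by (simp add: rcone_eq_pcone_at)
qed

lemma pcone_in_Hset_rcone: "(e, w, b) \<in> Ltrip \<Longrightarrow> pcone w \<in> Hset (rcone e) (Lcls (b::'a))"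
  using Hset_rcone by (auto simp: Ltrip_iff)

lemma Hmap_rcone:
  assumes "e \<in> Eset" "(b, v, b') \<in> Ltrip" "(e, w, b) \<in> Ltrip"
  shows "Hmap (rcone e) (rmor b v b') (pcone (w::'a)) = pcone (w * v)"
proof -
  have "e * w = w" using assms(3) by (simp add: Ltrip_iff)
  then show ?thesis
    using Hmap_pcone_at[OF assms(1) Lrel_refl apex_pcone_at_self[OF assms(1)] assms(2,3)]
    by (simp add: rcone_eq_pcone_at)
qed

lemma Hfun_pcone_at_eq_rcone:
  assumes a: "a \<in> Eset" "Lrel a y" "apex (pcone_at y a) = Lcls a"
    and k: "k \<in> Eset" "k * y = y" "k = (y::'a) * x"
  shows "Hfun (pcone_at y a) = Hfun (rcone k)"
proof -
  note factor = Ltrip_Rrel_factor[OF a(1,2) k]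
  have Hset: "Hset (pcone_at y a) (Lcls b) = Hset (rcone k) (Lcls b)" if b: "b \<in> Eset" for b
    unfolding Hset_pcone_at[OF a b] Hset_rcone[OF k(1) b] factor[OF b] by auto
  have Hmap: "Hmap (pcone_at y a) g = Hmap (rcone k) g" if "g \<in> Lmors" for g
  proof -
    obtain b v b' where t: "(b, v, b') \<in> Ltrip" and g: "g = rmor b v b'"
      using \<open>g \<in> Lmors\<close> by (auto simp: Lmors_iff Lhom_iff)
    then have b: "b \<in> Eset" and dom: "Ldom g = Lcls b" by (simp_all add: Ltrip_iff Ldom_rmor)
    show ?thesis
    proof (rule extensionalityI[OF Hmap_extensional])
      show "Hmap (rcone k) g \<in> extensional (Hset (pcone_at y a) (Ldom g))"
        using Hmap_extensional Hset[OF b] dom by metis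
      fix \<delta> assume "\<delta> \<in> Hset (pcone_at y a) (Ldom g)"
      then obtain w where w: "(a, w, b) \<in> Ltrip" "\<delta> = pcone (y * w)" using Hset_pcone_at[OF a b] dom by auto
      then have "(k, y * w, b) \<in> Ltrip" using factor[OF b] by blast
      then show "Hmap (pcone_at y a) g \<delta> = Hmap (rcone k) g \<delta>"
        using Hmap_pcone_at[OF a t w(1)] Hmap_rcone[OF k(1) t] w(2) g by simp
    qed
  qed
  have "c \<in> Lobj \<Longrightarrow> Hset (pcone_at y a) c = Hset (rcone k) c" for c
    using Hset by (blast elim: LobjE)
  then show ?thesis unfolding Hfun_def using Hmap by (simp cong: restrict_cong)
qed

lemma Hfun_rcone_Rrel:
  assumes "e \<in> Eset" "e' \<in> Eset" "Rrel e (e'::'a)"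
  shows "Hfun (rcone e) = Hfun (rcone e')"
proof -
  have "e' * e = e" "e' = e * e'" using assms by (auto simp: Rrel_Eset_iff)
  from Hfun_pcone_at_eq_rcone[OF assms(1) Lrel_refl apex_pcone_at_self[OF assms(1)] assms(2) this]
  show ?thesis by (simp add: rcone_eq_pcone_at)
qed

section \<open>The functor \<open>\<Gamma>\<^sub>G\<close>\<close>

lemma Gamma_obj_Rcls: "e \<in> Eset \<Longrightarrow> Gamma_obj (Rcls (e::'a)) = Hfun (rcone e)"
  unfolding Gamma_obj_def
  by (rule some_equality, blast) (auto simp: Rcls_eq_iff intro: Hfun_rcone_Rrel[symmetric])

lemma eta_rcone:
  assumes e: "e \<in> Eset" and w: "(e, w, b) \<in> Ltrip"
  shows "eta (rcone e) (Lcls b) (pcone w) = rmor e (w::'a) b"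
  unfolding eta_def apex_rcone[OF e]
proof (rule some_equality)
  have star: "cone_star (rcone e) (Lepi (rmor e w' b)) = pcone w'" if "(e, w', b) \<in> Ltrip" for w'
    using cone_star_Lepi_pcone_at[OF e Lrel_refl that] that by (simp add: rcone_eq_pcone_at Ltrip_iff)
  show "rmor e w b \<in> Lhom (Lcls e) (Lcls b) \<and> pcone w = cone_star (rcone e) (Lepi (rmor e w b))"
    using star[OF w] rmor_in_Lhom[OF w] by simp
  fix f assume f: "f \<in> Lhom (Lcls e) (Lcls b) \<and> pcone w = cone_star (rcone e) (Lepi f)"
  then obtain w' where w': "(e, w', b) \<in> Ltrip" "f = rmor e w' b"
    using Lhom_Lcls_iff[of e b] e w by (auto simp: Ltrip_iff)
  then have "pcone (e * w) = pcone (e * w')" using f star w by (simp add: Ltrip_iff)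
  then have "e * w = e * w'" by (rule pcone_mult_left_inj)
  then show "f = rmor e w b" using w w' by (simp add: Ltrip_iff)
qed

lemma Gamma_formula_pcone:
  assumes t: "(e, u, f) \<in> Rtrip" and w: "(e, w, b) \<in> Ltrip"
  shows "Gamma_formula e u f (Lcls b) (pcone w) = pcone (u * (w::'a))"
proof -
  have E: "e \<in> Eset" "f \<in> Eset" "b \<in> Eset" using t w by (auto simp: Rtrip_iff Ltrip_iff)
  have "pcone w \<in> Hset (rcone e) (Lcls b)" using w by (rule pcone_in_Hset_rcone)
  then have "Gamma_formula e u f (Lcls b) (pcone w) = cone_star (rcone f) (Lepi (Lcomp (rmor f u e) (rmor e w b)))"
    using eta_rcone[OF E(1) w] E by (simp add: Gamma_formula_def Lcls_in_Lobj)
  also have "\<dots> = cone_star (rcone f) (Lepi (rmor f (u * w) b))"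
    using t w by (simp add: Lcomp_rmor Rtrip_iff Ltrip_iff)
  also have "\<dots> = pcone (f * (u * w))"
    unfolding rcone_eq_pcone_at using Rtrip_mult_Ltrip[OF t w]
    by (rule cone_star_Lepi_pcone_at[OF E(2) Lrel_refl])
  finally show ?thesis using Rtrip_mult_Ltrip[OF t w] by (simp add: Ltrip_iff)
qed

lemma Hfun_rcone_transformation_eqI:
  assumes e: "e \<in> Eset"
    and ext: "\<tau> \<in> extensional Lobj" "\<sigma> \<in> extensional Lobj"
      "\<And>c. c \<in> Lobj \<Longrightarrow> \<tau> c \<in> extensional (Hset (rcone e) c)"
      "\<And>c. c \<in> Lobj \<Longrightarrow> \<sigma> c \<in> extensional (Hset (rcone e) c)"
    and eq: "\<And>b w. (e, w, b) \<in> Ltrip \<Longrightarrow> \<tau> (Lcls b) (pcone w) = \<sigma> (Lcls b) (pcone (w::'a))"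
  shows "\<tau> = \<sigma>"
proof (rule extensionalityI[OF ext(1,2)])
  fix c :: "'a set" assume c: "c \<in> Lobj"
  then obtain b where b: "b \<in> Eset" "c = Lcls b" by (rule LobjE)
  show "\<tau> c = \<sigma> c"
    by (rule extensionalityI[OF ext(3,4)[OF c]])
      (use eq Hset_rcone[OF e b(1)] b(2) in auto)
qed

lemma Gamma_formula_cong:
  assumes t: "(e, u, f) \<in> Rtrip" "(e', u', f') \<in> Rtrip" and eq: "lmor e u f = lmor e' u' (f'::'a)"
  shows "Gamma_formula e u f = Gamma_formula e' u' f'"
proof -
  have r: "Rrel e e'" "u = u' * e" using lmor_eq_iff[OF t] eq by blast+
  have E: "e \<in> Eset" "e' \<in> Eset" using t by (auto simp: Rtrip_iff)
  have ee: "e' * e = e" "e * e' = e'" using r E by (auto simp: Rrel_Eset_iff)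
  have "c \<in> Lobj \<Longrightarrow> Hset (rcone e') c = Hset (rcone e) c" for c
    using Hfun_rcone_Rrel[OF E r(1)] by (metis Hfun_fst)
  then show ?thesis
  proof (intro Hfun_rcone_transformation_eqI[OF E(1)])
    fix w b assume w: "(e, w, b) \<in> Ltrip"
    then have "(e', w, b) \<in> Ltrip" using ee E by (auto simp: Ltrip_iff) (metis mult.assoc)
    then show "Gamma_formula e u f (Lcls b) (pcone w) = Gamma_formula e' u' f' (Lcls b) (pcone w)"
      using Gamma_formula_pcone[OF t(1) w] Gamma_formula_pcone[OF t(2)] w r(2)
      by (simp add: Ltrip_iff mult.assoc)
  qed (metis Gamma_formula_extensional Gamma_formula_component_extensional)+
qed

lemma Gamma_mor_lmor: "(e, u, f) \<in> Rtrip \<Longrightarrow> Gamma_mor (lmor e u (f::'a)) = Gamma_formula e u f"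
  unfolding Gamma_mor_def by (rule some_equality, blast) (metis Gamma_formula_cong)

lemma Gamma_formula_NLhom:
  assumes t: "(e, u, f) \<in> Rtrip"
  shows "Gamma_formula e u (f::'a) \<in> NLhom (Hfun (rcone e)) (Hfun (rcone f))"
proof -
  have E: "e \<in> Eset" "f \<in> Eset" using t by (auto simp: Rtrip_iff)
  have maps: "Gamma_formula e u f (Lcls b) ` Hset (rcone e) (Lcls b) \<subseteq> Hset (rcone f) (Lcls b)"
    if b: "b \<in> Eset" for b
    using Gamma_formula_pcone[OF t] Rtrip_mult_Ltrip[OF t]
    by (auto simp: Hset_rcone[OF E(1) b] Hset_rcone[OF E(2) b])
  have natural: "Hmap (rcone f) g (Gamma_formula e u f c x) = Gamma_formula e u f d (Hmap (rcone e) g x)"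
    if g: "g \<in> Lhom c d" and x: "x \<in> Hset (rcone e) c" for c d g x
  proof -
    obtain b v b' where bv: "(b, v, b') \<in> Ltrip" "c = Lcls b" "d = Lcls b'" "g = rmor b v b'"
      using g by (auto simp: Lhom_iff)
    then obtain w where w: "(e, w, b) \<in> Ltrip" "x = pcone w"
      using x Hset_rcone[OF E(1)] by (auto simp: Ltrip_iff)
    show ?thesis
      using Gamma_formula_pcone[OF t w(1)] Gamma_formula_pcone[OF t Ltrip_mult[OF w(1) bv(1)]]
        Hmap_rcone[OF E(2) bv(1) Rtrip_mult_Ltrip[OF t w(1)]] Hmap_rcone[OF E(1) bv(1) w(1)]
      by (simp add: bv w mult.assoc)
  qed
  show ?thesis unfolding NLhom_def
    using maps natural
    by (auto simp: Hfun_fst Hfun_snd Gamma_formula_extensional Gamma_formula_component_extensional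
        elim!: LobjE)
qed

lemma Gamma_formula_identity_on:
  assumes t: "(e, k, f) \<in> Rtrip" and k: "k * e = e" and c: "c \<in> Lobj" and x: "x \<in> Hset (rcone e) c"
  shows "Gamma_formula e k (f::'a) c x = x"
proof -
  have e: "e \<in> Eset" using t by (simp add: Rtrip_iff)
  obtain b where b: "b \<in> Eset" "c = Lcls b" using c by (rule LobjE)
  then obtain w where "(e, w, b) \<in> Ltrip" "x = pcone w" using x Hset_rcone[OF e] by auto
  then show ?thesis using Gamma_formula_pcone[OF t] k b by (metis Ltrip_iff mult.assoc)
qed

lemma Gamma_formula_is_incl:
  assumes "k \<in> Eset" "f \<in> Eset" "f * k = (k::'a)"
  shows "NLis_incl (Hfun (rcone k)) (Hfun (rcone f)) (Gamma_formula k k f)"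
proof -
  have t: "(k, k, f) \<in> Rtrip" using assms by (simp add: Rtrip_iff Eset_iff)
  then show ?thesis unfolding NLis_incl_def
    using Gamma_formula_NLhom Gamma_formula_identity_on assms by (simp add: Hfun_fst Eset_iff)
qed

lemma Gamma_formula_idem:
  assumes e: "e \<in> Eset"
  shows "Gamma_formula e e (e::'a) = NLid (Hfun (rcone e))"
proof -
  have "(e, e, e) \<in> Rtrip" using e by (simp add: Rtrip_iff Eset_iff)
  then show ?thesis
    using e Gamma_formula_identity_on[of e e e]
    by (intro extensionalityI[OF Gamma_formula_extensional])
      (auto simp: NLid_def Hfun_fst Eset_iff Gamma_formula_component_extensional
        intro!: extensionalityI[OF Gamma_formula_component_extensional])
qed

lemma Gamma_formula_comp:
  assumes t: "(e, u, f) \<in> Rtrip" "(f, v, g) \<in> Rtrip"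
  shows "Gamma_formula e (v * u) (g::'a) = NLcomp (Hfun (rcone e)) (Gamma_formula e u f) (Gamma_formula f v g)"
proof (rule Hfun_rcone_transformation_eqI)
  have t2: "(e, v * u, g) \<in> Rtrip" using t by (auto simp: Rtrip_iff) (metis mult.assoc)+
  fix w b assume w: "(e, w, b) \<in> Ltrip"
  have "pcone w \<in> Hset (rcone e) (Lcls b)" using w by (rule pcone_in_Hset_rcone)
  then show "Gamma_formula e (v * u) g (Lcls b) (pcone w) =
      NLcomp (Hfun (rcone e)) (Gamma_formula e u f) (Gamma_formula f v g) (Lcls b) (pcone w)"
    using w Gamma_formula_pcone[OF t2 w] Gamma_formula_pcone[OF t(1) w]
      Gamma_formula_pcone[OF t(2) Rtrip_mult_Ltrip[OF t(1) w]]
    by (simp add: NLcomp_def Hfun_fst Lcls_in_Lobj Ltrip_iff mult.assoc)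
qed (use t in \<open>auto simp: Rtrip_iff NLcomp_def Hfun_fst Gamma_formula_extensional
    Gamma_formula_component_extensional\<close>)

text \<open>Yoneda: a transformation is fixed by where it sends \<open>\<rho>\<^sup>e = r\<^sup>e\<close>, and naturality along
  \<open>r(e, w, b)\<close> transports that value to every \<open>\<rho>\<^sup>w\<close>.\<close>
lemma NLhom_rcone_obtains_Gamma_formula:
  assumes E: "e \<in> Eset" "f \<in> Eset" and \<tau>: "\<tau> \<in> NLhom (Hfun (rcone e)) (Hfun (rcone (f::'a)))"
  obtains u where "(e, u, f) \<in> Rtrip" "\<tau> = Gamma_formula e u f"
proof -
  have ee: "(e, e, e) \<in> Ltrip" using E by (simp add: Ltrip_iff Eset_iff)
  have "\<tau> (Lcls e) (pcone e) \<in> Hset (rcone f) (Lcls e)"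
    using NLhom_mapsto[OF \<tau> Lcls_in_Lobj[OF E(1)]] pcone_in_Hset_rcone[OF ee] E
    by (simp add: Hfun_fst Lcls_in_Lobj)
  then obtain u where u: "(f, u, e) \<in> Ltrip" "\<tau> (Lcls e) (pcone e) = pcone u"
    using Hset_rcone[OF E(2,1)] by auto
  then have t: "(e, u, f) \<in> Rtrip" by (simp add: Ltrip_iff Rtrip_iff)
  have "\<tau> = Gamma_formula e u f"
  proof (rule Hfun_rcone_transformation_eqI[OF E(1)])
    fix w b assume w: "(e, w, b) \<in> Ltrip"
    have "Hmap (rcone f) (rmor e w b) (\<tau> (Lcls e) (pcone e))
        = \<tau> (Lcls b) (Hmap (rcone e) (rmor e w b) (pcone e))"
      using NLhom_natural[OF \<tau> rmor_in_Lhom[OF w]] pcone_in_Hset_rcone[OF ee] E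
      by (simp add: Hfun_fst Hfun_snd[OF rmor_in_Lhom[OF w]] Lcls_in_Lobj)
    then show "\<tau> (Lcls b) (pcone w) = Gamma_formula e u f (Lcls b) (pcone w)"
      using Hmap_rcone[OF E(2) w u(1)] Hmap_rcone[OF E(1) w ee]
        Gamma_formula_pcone[OF t w] u(2) w by (simp add: Ltrip_iff)
  qed (use \<tau> in \<open>auto simp: NLhom_def Hfun_fst Gamma_formula_extensional
      Gamma_formula_component_extensional\<close>)
  then show ?thesis using t that by blast
qed

lemma Gamma_formula_inj:
  assumes t: "(e, u, f) \<in> Rtrip" "(e, u', f) \<in> Rtrip"
    and eq: "Gamma_formula e u f = Gamma_formula e u' (f::'a)"
  shows "u = u'"
proof -
  have ee: "(e, e, e) \<in> Ltrip" using t by (simp add: Ltrip_iff Rtrip_iff Eset_iff)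
  have "pcone (f * u) = pcone (f * u')"
    using Gamma_formula_pcone[OF t(1) ee] Gamma_formula_pcone[OF t(2) ee] eq t
    by (simp add: Rtrip_iff)
  then show ?thesis using t by (metis Rtrip_iff pcone_mult_left_inj)
qed

lemma Gamma_mor_bij_betw_Rcls:
  assumes E: "e \<in> Eset" "f \<in> Eset"
  shows "bij_betw Gamma_mor (Rhom (Rcls e) (Rcls f)) (NLhom (Hfun (rcone e)) (Hfun (rcone (f::'a))))"
proof -
  have Rhom: "Rhom (Rcls e) (Rcls f) = (\<lambda>u. lmor e u f) ` {u. (e, u, f) \<in> Rtrip}"
    using Rhom_Rcls_iff[OF E] by auto
  have "inj_on (\<lambda>u. Gamma_mor (lmor e u f)) {u. (e, u, f) \<in> Rtrip}"
    by (rule inj_onI) (simp add: Gamma_mor_lmor Gamma_formula_inj)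
  moreover have "(\<lambda>u. Gamma_mor (lmor e u f)) ` {u. (e, u, f) \<in> Rtrip} = NLhom (Hfun (rcone e)) (Hfun (rcone f))"
    using NLhom_rcone_obtains_Gamma_formula[OF E] Gamma_formula_NLhom
    by (auto simp: Gamma_mor_lmor)
  ultimately show ?thesis unfolding Rhom bij_betw_def image_image inj_on_def by blast
qed

lemma Hfun_rcone_eq_imp_left_unit:
  assumes E: "e \<in> Eset" "k \<in> Eset" "k' \<in> Eset" and ek: "e * k = k" "e * k' = (k'::'a)"
    and eq: "Hfun (rcone k) = Hfun (rcone k')"
  shows "k' * k = k"
proof -
  have kk: "(k, k, k) \<in> Ltrip" using E by (simp add: Ltrip_iff Eset_iff)
  have "pcone k \<in> Hset (rcone k') (Lcls k)"
    using pcone_in_Hset_rcone[OF kk] eq E by (metis Hfun_fst Lcls_in_Lobj)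
  then obtain w where w: "(k', w, k) \<in> Ltrip" "pcone k = pcone w"
    using Hset_rcone[OF E(3,2)] by auto
  then have "pcone (e * k) = pcone (e * w)" using ek by (metis Ltrip_iff mult.assoc)
  then have "k = w" using ek w(1) pcone_mult_left_inj by (metis Ltrip_iff mult.assoc)
  then show ?thesis using w(1) by (simp add: Ltrip_iff)
qed

lemma normal_cone_pcone_Lrel:
  assumes n: "normal_cone (pcone y) (Lcls a)" and a: "a \<in> Eset"
  shows "Lrel a (y::'a)"
proof -
  have "pcone y (Lcls a) \<in> Lhom (Lcls a) (Lcls a)"
    using n a by (simp add: normal_cone_def Lcls_in_Lobj)
  moreover have "(a, a * y, Lidem y) \<in> Ltrip"
    using a Lidem_Lrel[of y] Lidem_right_unit[of y] by (auto simp: Ltrip_iff Eset_absorb_left mult.assoc)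
  then have "pcone y (Lcls a) \<in> Lhom (Lcls a) (Lcls (Lidem y))"
    using pcone_Lcls[OF a] by (simp add: rmor_in_Lhom)
  ultimately have "Lcls (Lidem y) = Lcls a" using Lhom_unique by blast
  then show ?thesis using Lidem_Lrel[of y] a Lcls_eq_iff by (meson Lrel_sym Lrel_trans)
qed

text \<open>A subfunctor \<open>H(\<gamma>;-) \<subseteq> H(r\<^sup>e;-)\<close> contains \<open>\<gamma>\<close> itself, so \<open>\<gamma> = \<rho>\<^sup>y\<close> with \<open>y \<in> eS\<close>,
  and then \<open>H(\<gamma>;-) = H(r\<^sup>k;-)\<close> for any \<open>k \<in> E(R_y)\<close>.\<close>
lemma NLsub_Hfun_rcone_obtains:
  assumes e: "e \<in> Eset" and n: "normal_cone \<gamma> d" and sub: "NLsub (Hfun \<gamma>) (Hfun (rcone (e::'a)))"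
  obtains k where "k \<in> Eset" "e * k = k" "Hfun \<gamma> = Hfun (rcone k)"
proof -
  have "d \<in> Lobj" using n by (simp add: normal_cone_def)
  then obtain a where a: "a \<in> Eset" "d = Lcls a" by (rule LobjE)
  have La: "Lcls a \<in> Lobj" using a by (simp add: Lcls_in_Lobj)
  obtain \<tau> where \<tau>: "NLis_incl (Hfun \<gamma>) (Hfun (rcone e)) \<tau>" using sub by (auto simp: NLsub_def)
  have "\<gamma> \<in> Hset \<gamma> (Lcls a)" using normal_cone_in_Hset n a by simp
  then have "\<tau> (Lcls a) \<gamma> = \<gamma>" "\<tau> (Lcls a) \<gamma> \<in> Hset (rcone e) (Lcls a)"
    using \<tau> NLhom_mapsto[of \<tau> "Hfun \<gamma>" "Hfun (rcone e)" "Lcls a" \<gamma>] La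
    by (simp_all add: NLis_incl_def Hfun_fst)
  then obtain y where y: "(e, y, a) \<in> Ltrip" "\<gamma> = pcone y"
    using Hset_rcone[OF e a(1)] by auto
  then have "Lrel a y" using normal_cone_pcone_Lrel n a by simp
  then have \<gamma>: "\<gamma> = pcone_at y a" using pcone_at_eq_pcone[OF a(1)] y(2) by simp
  obtain k x where k: "k \<in> Eset" "k * y = y" "k = y * x"
    using Rrel_idempotent_exists by blast
  have "apex (pcone_at y a) = Lcls a" using apex_eq n a \<gamma> by simp
  then have "Hfun \<gamma> = Hfun (rcone k)"
    using Hfun_pcone_at_eq_rcone[OF a(1) \<open>Lrel a y\<close> _ k] \<gamma> by simp
  moreover have "e * k = k" using k(3) y(1) by (simp add: Ltrip_iff mult.assoc[symmetric])
  ultimately show ?thesis using k(1) that by blast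
qed

lemma Gamma_obj_bij_betw_ideal:
  assumes e: "e \<in> Eset"
  shows "bij_betw Gamma_obj {d \<in> Robj. Rsub d (Rcls e)} {G \<in> NLobj. NLsub G (Gamma_obj (Rcls (e::'a)))}"
proof -
  let ?K = "{k \<in> Eset. e * k = k}"
  have ideal: "{d \<in> Robj. Rsub d (Rcls e)} = Rcls ` ?K"
    using Rsub_Rcls_iff[OF e] Rcls_in_Robj by auto
  have Gamma: "Gamma_obj (Rcls k) = Hfun (rcone k)" if "k \<in> Eset" for k :: 'a
    using Gamma_obj_Rcls[OF that] .
  have "inj_on Gamma_obj (Rcls ` ?K)"
  proof (rule inj_onI, clarify)
    fix k k' assume k: "k \<in> Eset" "e * k = k" "k' \<in> Eset" "e * k' = k'"
      and "Gamma_obj (Rcls k) = Gamma_obj (Rcls k')"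
    then have "Hfun (rcone k) = Hfun (rcone k')" using Gamma by simp
    then have "k' * k = k" "k * k' = k'"
      using Hfun_rcone_eq_imp_left_unit[OF e] k by metis+
    then show "Rcls k = Rcls k'" using k by (simp add: Rcls_eq_iff Rrel_Eset_iff)
  qed
  moreover have "Gamma_obj ` Rcls ` ?K = {G \<in> NLobj. NLsub G (Gamma_obj (Rcls e))}"
  proof (intro equalityI subsetI)
    fix G assume "G \<in> Gamma_obj ` Rcls ` ?K"
    then obtain k where k: "k \<in> Eset" "e * k = k" "G = Hfun (rcone k)" using Gamma by auto
    then show "G \<in> {G \<in> NLobj. NLsub G (Gamma_obj (Rcls e))}"
      using rcone_normal[OF k(1)] Gamma_formula_is_incl[OF k(1) e k(2)] Gamma[OF e]
      by (auto simp: NLobj_def NLsub_def is_normal_cone_def)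
  next
    fix G assume "G \<in> {G \<in> NLobj. NLsub G (Gamma_obj (Rcls e))}"
    then obtain \<gamma> d where "G = Hfun \<gamma>" "normal_cone \<gamma> d" "NLsub G (Hfun (rcone e))"
      using Gamma[OF e] by (auto simp: NLobj_def is_normal_cone_def)
    then obtain k where "k \<in> ?K" "G = Hfun (rcone k)"
      using NLsub_Hfun_rcone_obtains[OF e] by (metis (mono_tags, lifting) mem_Collect_eq)
    then show "G \<in> Gamma_obj ` Rcls ` ?K" using Gamma by (metis (no_types, lifting) image_eqI mem_Collect_eq)
  qed
  ultimately show ?thesis unfolding ideal bij_betw_def by blast
qed

lemma Gamma_obj_in_NLobj: "c \<in> Robj \<Longrightarrow> Gamma_obj c \<in> (NLobj :: 'a Sfun set)"
  using Gamma_obj_Rcls rcone_normal by (auto simp: NLobj_def is_normal_cone_def elim!: RobjE)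

lemma Gamma_mor_idem: "e \<in> Eset \<Longrightarrow> Gamma_mor (lmor e e (e::'a)) = NLid (Gamma_obj (Rcls e))"
  using Gamma_mor_lmor Gamma_formula_idem Gamma_obj_Rcls
  by (simp add: Rtrip_iff Eset_iff)

lemma Gamma_mor_Rcomp:
  assumes m: "m \<in> Rhom c d" and n: "n \<in> Rhom d (d'::'a set)"
  shows "Gamma_mor (Rcomp m n) = NLcomp (Gamma_obj c) (Gamma_mor m) (Gamma_mor n)"
proof -
  obtain e u f where t: "(e, u, f) \<in> Rtrip" "c = Rcls e" "d = Rcls f" "m = lmor e u f"
    using m by (rule RhomE)
  obtain g where g: "g \<in> Eset" "d' = Rcls g" using n by (auto elim!: RhomE simp: Rtrip_iff)
  obtain v where v: "(f, v, g) \<in> Rtrip" "n = lmor f v g"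
    using n t g Rhom_Rcls_iff[of f g] by (auto simp: Rtrip_iff)
  have "(e, v * u, g) \<in> Rtrip" using t v by (auto simp: Rtrip_iff) (metis mult.assoc)+
  then show ?thesis
    using Rcomp_lmor[OF t(1) v(1)] Gamma_formula_comp[OF t(1) v(1)] t v
      Gamma_obj_Rcls by (simp add: Gamma_mor_lmor Rtrip_iff)
qed

lemma Gamma_mor_Rincl:
  assumes "Rsub c (d::'a set)"
  shows "NLis_incl (Gamma_obj c) (Gamma_obj d) (Gamma_mor (Rincl c d))"
proof -
  obtain k f where k: "k \<in> Eset" "f \<in> Eset" "c = Rcls k" "d = Rcls f" "f * k = k"
    using assms by (auto simp: Rsub_def)
  then have "(k, k, f) \<in> Rtrip" by (simp add: Rtrip_iff Eset_iff)
  then show ?thesis using k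
    by (simp add: Rincl_Rcls Gamma_mor_lmor Gamma_obj_Rcls Gamma_formula_is_incl)
qed

lemma Gamma_mor_bij_betw:
  "c \<in> Robj \<Longrightarrow> d \<in> Robj \<Longrightarrow> bij_betw Gamma_mor (Rhom c d) (NLhom (Gamma_obj c) (Gamma_obj (d::'a set)))"
  using Gamma_mor_bij_betw_Rcls Gamma_obj_Rcls by (auto elim!: RobjE)

lemma Gamma_obj_bij_betw:
  "c \<in> Robj \<Longrightarrow> bij_betw Gamma_obj {d \<in> Robj. Rsub d c} {G \<in> NLobj. NLsub G (Gamma_obj (c::'a set))}"
  using Gamma_obj_bij_betw_ideal by (auto elim!: RobjE)

end

theorem mainTheorem17:
  fixes T :: "'a::semigroup_mult itself"
  assumes "regular_semigroup T"
  shows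
    \<comment> \<open>Gamma_G is well defined by the given formulas\<close>
    "(\<forall>e \<in> (Eset :: 'a set). Gamma_obj (Rcls e) = Hfun (rcone e))
   \<and> (\<forall>(e, u, f) \<in> (Rtrip :: ('a \<times> 'a \<times> 'a) set). Gamma_mor (lmor e u f) = Gamma_formula e u f)
    \<comment> \<open>Gamma_G is a functor R_G \<rightarrow> N*L_G\<close>
   \<and> (\<forall>c \<in> (Robj :: 'a set set). Gamma_obj c \<in> NLobj)
   \<and> (\<forall>c \<in> (Robj :: 'a set set). \<forall>d \<in> Robj. \<forall>m \<in> Rhom c d.
        Gamma_mor m \<in> NLhom (Gamma_obj c) (Gamma_obj d))
   \<and> (\<forall>e \<in> (Eset :: 'a set). Gamma_mor (lmor e e e) = NLid (Gamma_obj (Rcls e)))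
   \<and> (\<forall>c \<in> (Robj :: 'a set set). \<forall>d \<in> Robj. \<forall>d' \<in> Robj. \<forall>m \<in> Rhom c d. \<forall>n \<in> Rhom d d'.
        Gamma_mor (Rcomp m n) = NLcomp (Gamma_obj c) (Gamma_mor m) (Gamma_mor n))
    \<comment> \<open>local isomorphism: inclusion preserving\<close>
   \<and> (\<forall>c \<in> (Robj :: 'a set set). \<forall>d \<in> Robj. Rsub c d \<longrightarrow>
        NLis_incl (Gamma_obj c) (Gamma_obj d) (Gamma_mor (Rincl c d)))
    \<comment> \<open>fully faithful\<close>
   \<and> (\<forall>c \<in> (Robj :: 'a set set). \<forall>d \<in> Robj.
        bij_betw Gamma_mor (Rhom c d) (NLhom (Gamma_obj c) (Gamma_obj d)))
    \<comment> \<open>restriction to each ideal is bijective on objects onto the ideal of the image\<close>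
   \<and> (\<forall>c \<in> (Robj :: 'a set set).
        bij_betw Gamma_obj {d \<in> Robj. Rsub d c} {G \<in> NLobj. NLsub G (Gamma_obj c)})"
proof -
  have reg: "regular_semigroup TYPE('a)" using assms by (simp add: regular_semigroup_def)
  note bij = Gamma_mor_bij_betw[OF reg]
  show ?thesis
    using Gamma_obj_Rcls[OF reg] Gamma_mor_lmor[OF reg] Gamma_obj_in_NLobj[OF reg]
      bij_betw_apply[OF bij] Gamma_mor_idem[OF reg] Gamma_mor_Rcomp[OF reg]
      Gamma_mor_Rincl[OF reg] bij Gamma_obj_bij_betw[OF reg]
    by blast
qed

end
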